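(* Let $N\ge1$ and $L=\sum_{i=0}^N a_i(x)\partial_x^i$ with $a_i(x)=\sum_{j=0}^i a_{i,j}x^j$ complex polynomials, $a_0\equiv0$, $a_i\equiv0$ for $i>N$, and let $\delta_n^{(k)}=\sum_{i=k}^n\binom ni i!\,a_{i,i-k}$ ($0\le k\le n$). Suppose there are $\lambda_n\in\mathbb{C}$ ($n\ge0$, $\lambda_0=0$, $\lambda_n\notin\{0,\lambda_1,\ldots,\lambda_{n-1}\}$ for $n\ge1$) and monic polynomials $P_n(x)=\sum_{i=0}^nb_{n,i}x^i$ of degree $n$ with $\sum_{i=1}^Na_i\partial_x^iP_n=\lambda_nP_n$ for all $n\ge0$. Then for every $n\ge1$ and $k=1,\ldots,n$, $$(-1)^{k+1}\delta_n^{(k)}=\sum_{s=1}^n\Delta_{k,n,s}\,s!\,a_{s,s},$$ where $\Delta_{k,n,s}$ is the determinant of the $k\times k$ matrix $D$ with first row $D_{1,c}=\left[\binom{n-k}{s-1}+\binom{n-k+1}{s-1}+\cdots+\binom{n-k+c-1}{s-1}\right]b_{n-k+c,\,n-k}$ ($1\le c\le k$) and, for $2\le\rho\le k$, $D_{\rho,c}=b_{n-k+c,\;n-k+\rho-1}$.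
   Context: Conventions: $b_{m,m}=1$, $b_{m,l}=0$ for $l>m$; $\binom{m}{s-1}=0$ for $m<s-1$; $a_{s,s}=0$ for $s>N$. $\partial_x^i$ is the $i$-th derivative in $x$. *)

theory Defs
  imports "HOL-Computational_Algebra.Polynomial" "Jordan_Normal_Form.Determinant"
begin

definition coef_poly :: "(nat \<Rightarrow> nat \<Rightarrow> complex) \<Rightarrow> nat \<Rightarrow> complex poly" where
  "coef_poly a i = (\<Sum>j\<le>i. monom (a i j) j)"

definition opL :: "nat \<Rightarrow> (nat \<Rightarrow> nat \<Rightarrow> complex) \<Rightarrow> complex poly \<Rightarrow> complex poly" where
  "opL N a p = (\<Sum>i=1..N. coef_poly a i * (pderiv ^^ i) p)"

definition delta :: "(nat \<Rightarrow> nat \<Rightarrow> complex) \<Rightarrow> nat \<Rightarrow> nat \<Rightarrow> complex" where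
  "delta a n k = (\<Sum>i=k..n. of_nat (n choose i) * fact i * a i (i - k))"

(* the k x k matrix D (0-indexed rows/columns), with b m l = coeff (P m) l *)
definition Dmat :: "(nat \<Rightarrow> complex poly) \<Rightarrow> nat \<Rightarrow> nat \<Rightarrow> nat \<Rightarrow> complex mat" where
  "Dmat P k n s = mat k k (\<lambda>(r, c).
     if r = 0 then
       (\<Sum>t=0..c. of_nat ((n - k + t) choose (s - 1))) * coeff (P (n - k + c + 1)) (n - k)
     else coeff (P (n - k + c + 1)) (n - k + r))"

definition Delta :: "(nat \<Rightarrow> complex poly) \<Rightarrow> nat \<Rightarrow> nat \<Rightarrow> nat \<Rightarrow> complex" where
  "Delta P k n s = det (Dmat P k n s)"

end

theory Submission
  imports Defs
begin

(*
  Let m = n - k and b q l = coeff (P q) l.  Comparing coefficients of x^m in L P_q = lam_q P_q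
  for q = m + 1, ..., n gives

    b q m * (lam_q - delta_m^(0)) = sum_{r=1..k} b q (m + r) * delta_{m+r}^(r),

  and the leading coefficient gives lam_q = delta_q^(0).  By the hockey-stick identity,
  sum_s D_{1,c} s! a_{s,s} = b q m * (delta_q^(0) - delta_m^(0)) for q = m + c, so by linearity of
  the determinant in its first row the right-hand side is the determinant of D with first row
  replaced by sum_r delta_{m+r}^(r) * (b q (m + r))_q.  For r < k this row repeats a row of D;
  for r = k it is the last unit vector (P_q is monic of degree q), whose cofactor is (-1)^(k-1)
  times a unitriangular determinant.
*)

lemma pochhammer_Suc_eq_binomial_fact:
  "pochhammer (Suc m) i = ((m + i) choose i) * fact i"
proof (induction i)
  case (Suc i)
  have "pochhammer (Suc m) (Suc i) = Suc (m + i) * ((m + i) choose i) * fact i"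
    by (simp add: pochhammer_Suc Suc.IH algebra_simps)
  also have "Suc (m + i) * ((m + i) choose i) = (Suc (m + i) choose Suc i) * Suc i"
    using Suc_times_binomial_eq[of "m + i" i] by (simp only: mult.commute)
  finally show ?case
    by (simp only: fact_Suc of_nat_id mult.assoc add_Suc_right)
qed simp

lemma higher_pderiv_monom_binomial:
  "(pderiv ^^ i) (monom c l) = monom (of_nat (l choose i) * fact i * c) (l - i)"
  for c :: "'a :: {comm_semiring_1, semiring_no_zero_divisors, semiring_char_0}"
proof (rule poly_eqI)
  fix m
  have "(pochhammer (of_nat (Suc m)) i :: 'a) = of_nat ((m + i) choose i) * fact i"
    unfolding pochhammer_of_nat pochhammer_Suc_eq_binomial_fact by simp
  then show "coeff ((pderiv ^^ i) (monom c l)) m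
      = coeff (monom (of_nat (l choose i) * fact i * c) (l - i)) m"
    unfolding coeff_higher_pderiv coeff_monom by (cases "i \<le> l") auto
qed

lemma opL_sum: "opL N a (sum f A) = (\<Sum>x\<in>A. opL N a (f x))"
  unfolding opL_def higher_pderiv_sum sum_distrib_left by (rule sum.swap)

lemma sum_choose_upper_shifted:
  "(m choose Suc j) + (\<Sum>t=0..c. (m + t) choose j) = Suc (m + c) choose Suc j"
  by (induction c) auto

locale degree_preserving_operator =
  fixes N :: nat and a :: "nat \<Rightarrow> nat \<Rightarrow> complex"
  assumes a_deg: "\<And>i j. j > i \<Longrightarrow> a i j = 0"
    and a0: "\<And>j. a 0 j = 0"
    and aN: "\<And>i j. i > N \<Longrightarrow> a i j = 0"
begin

lemma coeff_coef_poly: "coeff (coef_poly a i) j = a i j"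
  using a_deg by (auto simp: coef_poly_def coeff_sum)

lemma coeff_opL_monom:
  "coeff (opL N a (monom c l)) m = (if m \<le> l then c * delta a l (l - m) else 0)"
proof -
  define t where
    "t i = (if l \<le> m + i \<and> i \<le> l
      then c * (of_nat (l choose i) * fact i * a i (m + i - l)) else 0)"
    for i
  have "coeff (opL N a (monom c l)) m = (\<Sum>i=1..N. t i)"
    unfolding opL_def coeff_sum higher_pderiv_monom_binomial
    by (intro sum.cong) (auto simp: t_def mult.commute[of "coef_poly a _"] coeff_monom_mult
        coeff_coef_poly Suc_diff_le)
  also have "\<dots> = (if m \<le> l then c * delta a l (l - m) else 0)"
  proof (cases "m \<le> l")
    case True
    have "(\<Sum>i=1..N. t i) = (\<Sum>i=0..N + l. t i)"
      by (rule sum.mono_neutral_left) (auto simp: t_def a0 aN not_less_eq_eq)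
    also have "\<dots> = (\<Sum>i=l-m..l. t i)"
      by (rule sum.mono_neutral_right) (auto simp: t_def)
    also have "\<dots> = c * delta a l (l - m)"
      unfolding delta_def sum_distrib_left using True
      by (intro sum.cong) (auto simp: t_def add.commute)
    finally show ?thesis using True by simp
  next
    case False
    then have "t i = 0" for i
      using a_deg[of i "m + i - l"] by (auto simp: t_def)
    with False show ?thesis by simp
  qed
  finally show ?thesis .
qed

lemma coeff_opL:
  assumes deg: "degree p \<le> m + K"
  shows "coeff (opL N a p) m = (\<Sum>r\<le>K. coeff p (m + r) * delta a (m + r) r)"
proof -
  have "coeff (opL N a p) m = (\<Sum>l\<le>m + K. coeff (opL N a (monom (coeff p l) l)) m)"
    by (subst poly_as_sum_of_monoms'[OF deg, symmetric]) (simp only: opL_sum coeff_sum)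
  also have "\<dots> = (\<Sum>l=m..m + K. coeff p l * delta a l (l - m))"
    by (rule sum.mono_neutral_cong_right) (auto simp: coeff_opL_monom)
  also have "\<dots> = (\<Sum>r\<le>K. coeff p (m + r) * delta a (m + r) r)"
    using sum.shift_bounds_cl_nat_ivl[of "\<lambda>l. coeff p l * delta a l (l - m)" 0 m K]
    by (simp add: atLeast0AtMost add.commute)
  finally show ?thesis .
qed

lemma eigenvalue_opL:
  assumes eig: "opL N a p = smult lam p" and "p \<noteq> 0"
  shows "lam = delta a (degree p) 0"
proof -
  have "lam * lead_coeff p = coeff (opL N a p) (degree p)"
    by (simp add: eig)
  also have "\<dots> = lead_coeff p * delta a (degree p) 0"
    using coeff_opL[of p "degree p" 0] by simp
  finally show ?thesis
    using \<open>p \<noteq> 0\<close> by (simp add: mult.commute)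
qed

lemma coeff_opL_eigenpoly:
  assumes eig: "opL N a p = smult lam p" and "p \<noteq> 0" and deg: "degree p \<le> m + K"
  shows "coeff p m * (delta a (degree p) 0 - delta a m 0)
    = (\<Sum>r=1..K. coeff p (m + r) * delta a (m + r) r)"
proof -
  have "coeff p m * delta a (degree p) 0 = coeff (opL N a p) m"
    using eigenvalue_opL[OF eig \<open>p \<noteq> 0\<close>] by (simp add: eig)
  also have "\<dots> = coeff p m * delta a m 0 + (\<Sum>r=1..K. coeff p (m + r) * delta a (m + r) r)"
    unfolding coeff_opL[OF deg] atMost_atLeast0
    by (simp add: sum.atLeast_Suc_atMost)
  finally show ?thesis
    by (simp add: algebra_simps)
qed

lemma delta_zero_eq_sum:
  assumes "m \<le> n"
  shows "delta a m 0 = (\<Sum>s=1..n. of_nat (m choose s) * fact s * a s s)"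
proof -
  have "delta a m 0 = (\<Sum>s=0..n. of_nat (m choose s) * fact s * a s s)"
    unfolding delta_def diff_zero by (rule sum.mono_neutral_left) (use assms in auto)
  also have "\<dots> = (\<Sum>s=1..n. of_nat (m choose s) * fact s * a s s)"
    by (rule sum.mono_neutral_right) (auto simp: a0 not_less_eq_eq)
  finally show ?thesis .
qed

lemma delta_zero_diff:
  assumes "m + c < n"
  shows "delta a (Suc (m + c)) 0 - delta a m 0
    = (\<Sum>s=1..n. (\<Sum>t=0..c. of_nat ((m + t) choose (s - 1))) * fact s * a s s)"
proof -
  have binomial_diff: "(\<Sum>t=0..c. of_nat ((m + t) choose (s - 1)) :: complex)
      = of_nat (Suc (m + c) choose s) - of_nat (m choose s)" if "1 \<le> s" for s
    using sum_choose_upper_shifted[of m "s - 1" c] that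
    by (simp flip: of_nat_sum add: eq_diff_eq of_nat_add[symmetric] del: of_nat_add)
  then have "(\<Sum>s=1..n. (\<Sum>t=0..c. of_nat ((m + t) choose (s - 1))) * fact s * a s s)
      = (\<Sum>s=1..n. of_nat (Suc (m + c) choose s) * fact s * a s s
                 - of_nat (m choose s) * fact s * a s s)"
    by (intro sum.cong refl) (simp add: binomial_diff left_diff_distrib)
  also have "\<dots> = delta a (Suc (m + c)) 0 - delta a m 0"
    using assms by (simp add: sum_subtractf delta_zero_eq_sum[of _ n])
  finally show ?thesis ..
qed

end

lemma det_eq_sum_row0_cofactor:
  assumes A: "A \<in> carrier_mat k k" and B: "B \<in> carrier_mat k k" and "0 < k"
    and same_rows: "\<And>i j. 0 < i \<Longrightarrow> i < k \<Longrightarrow> j < k \<Longrightarrow> A $$ (i, j) = B $$ (i, j)"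
  shows "det A = (\<Sum>j<k. A $$ (0, j) * cofactor B 0 j)"
proof -
  have "cofactor A 0 j = cofactor B 0 j" for j
  proof -
    have "mat_delete A 0 j = mat_delete B 0 j"
      using A B same_rows by (intro eq_matI) (auto simp: mat_delete_def)
    then show ?thesis
      unfolding cofactor_def by simp
  qed
  then show ?thesis
    using laplace_expansion_row[OF A \<open>0 < k\<close>] by simp
qed

lemma Dmat_carrier: "Dmat P k n s \<in> carrier_mat k k"
  unfolding Dmat_def by simp

lemma dim_Dmat [simp]: "dim_row (Dmat P k n s) = k" "dim_col (Dmat P k n s) = k"
  unfolding Dmat_def by simp_all

lemma Dmat_index:
  "r < k \<Longrightarrow> c < k \<Longrightarrow> Dmat P k n s $$ (r, c) =
     (if r = 0 then
       (\<Sum>t=0..c. of_nat ((n - k + t) choose (s - 1))) * coeff (P (n - k + c + 1)) (n - k)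
     else coeff (P (n - k + c + 1)) (n - k + r))"
  unfolding Dmat_def by simp

lemma sum_Delta_row0_expansion:
  assumes "0 < k"
  shows "(\<Sum>s\<in>S. Delta P k n s * w s)
    = (\<Sum>j<k. (\<Sum>s\<in>S. Dmat P k n s $$ (0, j) * w s) * cofactor (Dmat P k n 1) 0 j)"
proof -
  have "Delta P k n s = (\<Sum>j<k. Dmat P k n s $$ (0, j) * cofactor (Dmat P k n 1) 0 j)" for s
    unfolding Delta_def
    by (rule det_eq_sum_row0_cofactor[OF Dmat_carrier Dmat_carrier assms]) (simp add: Dmat_index)
  then show ?thesis
    by (simp add: sum_distrib_left sum_distrib_right mult_ac sum.swap[of _ S])
qed

lemma sum_coeff_cofactor_Dmat_eq_0:
  assumes "1 \<le> r" "r < k"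
  shows "(\<Sum>j<k. coeff (P (n - k + j + 1)) (n - k + r) * cofactor (Dmat P k n 1) 0 j) = 0"
proof -
  define F where
    "F = mat k k (\<lambda>(i, j). coeff (P (n - k + j + 1)) (n - k + (if i = 0 then r else i)))"
  have F: "F \<in> carrier_mat k k"
    unfolding F_def by simp
  have "det F = 0"
    by (rule det_identical_rows[OF F, of 0 r]) (use assms in \<open>auto simp: F_def\<close>)
  moreover have
    "det F = (\<Sum>j<k. coeff (P (n - k + j + 1)) (n - k + r) * cofactor (Dmat P k n 1) 0 j)"
    using assms by (subst det_eq_sum_row0_cofactor[OF F Dmat_carrier]) (auto simp: F_def Dmat_index)
  ultimately show ?thesis
    by simp
qed

lemma cofactor_Dmat_last:
  assumes "1 \<le> k"
    and P_deg: "\<And>m. degree (P m) = m" and P_monic: "\<And>m. lead_coeff (P m) = 1"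
  shows "cofactor (Dmat P k n s) 0 (k - 1) = (-1) ^ (k - 1)"
proof -
  define U where "U = mat_delete (Dmat P k n s) 0 (k - 1)"
  have U: "U \<in> carrier_mat (k - 1) (k - 1)"
    unfolding U_def by (rule mat_delete_carrier[OF Dmat_carrier])
  have U_index: "U $$ (i, j) = coeff (P (n - k + j + 1)) (n - k + i + 1)"
    if "i < k - 1" "j < k - 1" for i j
    using that unfolding U_def mat_delete_def by (simp add: Dmat_index)
  have "upper_triangular U"
    using U by (auto simp: upper_triangular_def U_index coeff_eq_0 P_deg)
  then have "det U = prod_list (diag_mat U)"
    using det_upper_triangular[OF _ U] by simp
  also have "diag_mat U = replicate (k - 1) 1"
    using U P_monic P_deg by (auto simp: diag_mat_def U_index intro: nth_equalityI)
  finally show ?thesis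
    unfolding cofactor_def U_def by simp
qed

lemma sum_coeff_cofactor_Dmat_top:
  assumes "1 \<le> k" "k \<le> n"
    and P_deg: "\<And>m. degree (P m) = m" and P_monic: "\<And>m. lead_coeff (P m) = 1"
  shows "(\<Sum>j<k. coeff (P (n - k + j + 1)) n * cofactor (Dmat P k n 1) 0 j) = (-1) ^ (k - 1)"
proof -
  have "coeff (P (n - k + j + 1)) n = 0" if "j < k" "j \<noteq> k - 1" for j
    using that \<open>k \<le> n\<close> by (simp add: coeff_eq_0 P_deg)
  then have "(\<Sum>j<k. coeff (P (n - k + j + 1)) n * cofactor (Dmat P k n 1) 0 j)
      = coeff (P (n - k + (k - 1) + 1)) n * cofactor (Dmat P k n 1) 0 (k - 1)"
    using \<open>1 \<le> k\<close> by (subst sum.remove[of _ "k - 1"]) (auto intro!: sum.neutral)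
  also have "coeff (P (n - k + (k - 1) + 1)) n = 1"
    using assms(1,2) P_monic[of n] by (simp add: P_deg)
  finally show ?thesis
    using cofactor_Dmat_last[OF \<open>1 \<le> k\<close> P_deg P_monic] by simp
qed

lemma (in degree_preserving_operator) sum_Dmat_row0_weighted:
  assumes "j < k" "k \<le> n"
  shows "(\<Sum>s=1..n. Dmat P k n s $$ (0, j) * (fact s * a s s))
    = coeff (P (n - k + j + 1)) (n - k) * (delta a (n - k + j + 1) 0 - delta a (n - k) 0)"
  using assms delta_zero_diff[of "n - k" j n]
  by (simp add: Dmat_index sum_distrib_left sum_distrib_right mult_ac)

theorem lemma3:
  fixes N :: nat and a :: "nat \<Rightarrow> nat \<Rightarrow> complex"
    and lam :: "nat \<Rightarrow> complex" and P :: "nat \<Rightarrow> complex poly"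
  assumes N1: "N \<ge> 1"
    and a_deg: "\<And>i j. j > i \<Longrightarrow> a i j = 0"
    and a0: "\<And>j. a 0 j = 0"
    and aN: "\<And>i j. i > N \<Longrightarrow> a i j = 0"
    and lam0: "lam 0 = 0"
    and lam_dist: "\<And>n m. 1 \<le> n \<Longrightarrow> m < n \<Longrightarrow> lam n \<noteq> lam m"
    and P_deg: "\<And>n. degree (P n) = n"
    and P_monic: "\<And>n. lead_coeff (P n) = 1"
    and P_eig: "\<And>n. opL N a (P n) = smult (lam n) (P n)"
    and n1: "1 \<le> n" and k1: "1 \<le> k" and kn: "k \<le> n"
  shows "(-1) ^ (k + 1) * delta a n k = (\<Sum>s=1..n. Delta P k n s * fact s * a s s)"
proof -
  \<comment> \<open>The conditions on \<open>lam\<close> only make the \<open>P n\<close> exist; the identity needs just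
    the eigen-equations.\<close>
  interpret degree_preserving_operator N a
    using a_deg a0 aN by unfold_locales
  define C where "C j = cofactor (Dmat P k n 1) 0 j" for j
  have P_nonzero: "P m \<noteq> 0" for m
    using P_monic[of m] by auto
  have "(\<Sum>s=1..n. Delta P k n s * fact s * a s s)
      = (\<Sum>j<k. (\<Sum>s=1..n. Dmat P k n s $$ (0, j) * (fact s * a s s)) * C j)"
    using sum_Delta_row0_expansion[of k] k1 by (simp add: mult.assoc C_def)
  also have "\<dots> = (\<Sum>j<k.
      (\<Sum>r=1..k. coeff (P (n - k + j + 1)) (n - k + r) * delta a (n - k + r) r) * C j)"
  proof (intro sum.cong refl)
    fix j assume "j \<in> {..<k}"
    then show "(\<Sum>s=1..n. Dmat P k n s $$ (0, j) * (fact s * a s s)) * C j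
        = (\<Sum>r=1..k. coeff (P (n - k + j + 1)) (n - k + r) * delta a (n - k + r) r) * C j"
      using sum_Dmat_row0_weighted[of j k n P] kn
        coeff_opL_eigenpoly[OF P_eig P_nonzero, of "n - k + j + 1" "n - k" k]
      by (simp add: P_deg)
  qed
  also have "\<dots> = (\<Sum>r=1..k.
      delta a (n - k + r) r * (\<Sum>j<k. coeff (P (n - k + j + 1)) (n - k + r) * C j))"
    unfolding sum_distrib_left sum_distrib_right by (subst sum.swap) (simp add: mult_ac)
  also have "\<dots> = delta a n k * (-1) ^ (k - 1)"
    using k1 kn sum_coeff_cofactor_Dmat_eq_0[of _ k P n]
      sum_coeff_cofactor_Dmat_top[OF k1 kn P_deg P_monic]
    by (simp add: atLeastLessThanSuc_atLeastAtMost[symmetric] C_def)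
  finally show ?thesis
    using k1 by (cases k) simp_all
qed

end
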